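(* Let $X=\{(u,v)\in\mathbb{R}^2:0<u<1,\ 0<v<1\}$ with the Euclidean topology $\tau$ and the coordinatewise partial order $\preceq$. Then: (i) $(X,\tau,\preceq)$ is a locally compact, order-connected Hausdorff topological lattice; (ii) the canonical map $x\mapsto x^\downarrow$ topologically order-embeds $(X,\tau,\preceq)$ in $(C(X),\tau_F,\subseteq)$; (iii) the map $x\mapsto x^\downarrow$ from $(X,\tau)$ to $(C^\downarrow(X),\tau_V)$ is discontinuous at every point of $X$.
   Context: A partially ordered topological space is a topological space with a partial order whose graph is closed in the product; a topological lattice is one in which all binary meets and joins exist and $\wedge,\vee:X\times X\to X$ are continuous. $x^\downarrow=\{u\in X:u\preceq x\}$, $x^\uparrow=\{u\in X:x\preceq u\}$; order-connected means $x^\uparrow\cap y^\downarrow$ is connected whenever $x\preceq y$. $C(X)$ = closed subsets of $X$, $C^\downarrow(X)=\{x^\downarrow:x\in X\}$. Fell topology $\tau_F$: generated by $\{A:A\cap O\neq\emptyset\}$ ($O$ open) and $\{A:A\cap D=\emptyset\}$ ($D$ compact). Vietoris topology $\tau_V$: generated by $\{A:A\cap O\neq\emptyset\}$ ($O$ open) and $\{A:A\cap E=\emptyset\}$ ($E$ closed). "Topologically order-embeds": $x\preceq y\iff x^\downarrow\subseteq y^\downarrow$ and $x\mapsto x^\downarrow$ is a homeomorphism onto $C^\downarrow(X)$ with the relative Fell topology. *)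

theory Defs
  imports "HOL-Analysis.Analysis"
begin

definition down_set :: "'a topology \<Rightarrow> ('a \<Rightarrow> 'a \<Rightarrow> bool) \<Rightarrow> 'a \<Rightarrow> 'a set" where
  "down_set T le x = {u \<in> topspace T. le u x}"

definition up_set :: "'a topology \<Rightarrow> ('a \<Rightarrow> 'a \<Rightarrow> bool) \<Rightarrow> 'a \<Rightarrow> 'a set" where
  "up_set T le x = {u \<in> topspace T. le x u}"

definition partial_order_on_space :: "'a topology \<Rightarrow> ('a \<Rightarrow> 'a \<Rightarrow> bool) \<Rightarrow> bool" where
  "partial_order_on_space T le \<longleftrightarrow>
     (\<forall>x\<in>topspace T. le x x) \<and>
     (\<forall>x\<in>topspace T. \<forall>y\<in>topspace T. le x y \<and> le y x \<longrightarrow> x = y) \<and>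
     (\<forall>x\<in>topspace T. \<forall>y\<in>topspace T. \<forall>z\<in>topspace T. le x y \<and> le y z \<longrightarrow> le x z)"

definition po_space :: "'a topology \<Rightarrow> ('a \<Rightarrow> 'a \<Rightarrow> bool) \<Rightarrow> bool" where
  "po_space T le \<longleftrightarrow> partial_order_on_space T le \<and>
     closedin (prod_topology T T) {(x, y). x \<in> topspace T \<and> y \<in> topspace T \<and> le x y}"

definition is_meet :: "'a topology \<Rightarrow> ('a \<Rightarrow> 'a \<Rightarrow> bool) \<Rightarrow> 'a \<Rightarrow> 'a \<Rightarrow> 'a \<Rightarrow> bool" where
  "is_meet T le x y m \<longleftrightarrow> m \<in> topspace T \<and> le m x \<and> le m y \<and>
     (\<forall>z\<in>topspace T. le z x \<and> le z y \<longrightarrow> le z m)"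

definition is_join :: "'a topology \<Rightarrow> ('a \<Rightarrow> 'a \<Rightarrow> bool) \<Rightarrow> 'a \<Rightarrow> 'a \<Rightarrow> 'a \<Rightarrow> bool" where
  "is_join T le x y j \<longleftrightarrow> j \<in> topspace T \<and> le x j \<and> le y j \<and>
     (\<forall>z\<in>topspace T. le x z \<and> le y z \<longrightarrow> le j z)"

definition meet_op :: "'a topology \<Rightarrow> ('a \<Rightarrow> 'a \<Rightarrow> bool) \<Rightarrow> 'a \<Rightarrow> 'a \<Rightarrow> 'a" where
  "meet_op T le x y = (THE m. is_meet T le x y m)"

definition join_op :: "'a topology \<Rightarrow> ('a \<Rightarrow> 'a \<Rightarrow> bool) \<Rightarrow> 'a \<Rightarrow> 'a \<Rightarrow> 'a" where
  "join_op T le x y = (THE j. is_join T le x y j)"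

definition topological_lattice :: "'a topology \<Rightarrow> ('a \<Rightarrow> 'a \<Rightarrow> bool) \<Rightarrow> bool" where
  "topological_lattice T le \<longleftrightarrow> po_space T le \<and>
     (\<forall>x\<in>topspace T. \<forall>y\<in>topspace T. (\<exists>m. is_meet T le x y m) \<and> (\<exists>j. is_join T le x y j)) \<and>
     continuous_map (prod_topology T T) T (\<lambda>(x, y). meet_op T le x y) \<and>
     continuous_map (prod_topology T T) T (\<lambda>(x, y). join_op T le x y)"

definition order_connected :: "'a topology \<Rightarrow> ('a \<Rightarrow> 'a \<Rightarrow> bool) \<Rightarrow> bool" where
  "order_connected T le \<longleftrightarrow>
     (\<forall>x\<in>topspace T. \<forall>y\<in>topspace T. le x y \<longrightarrow> connectedin T (up_set T le x \<inter> down_set T le y))"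

definition closed_sets :: "'a topology \<Rightarrow> 'a set set" where
  "closed_sets T = {A. closedin T A}"

definition fell_topology :: "'a topology \<Rightarrow> 'a set topology" where
  "fell_topology T = subtopology
     (topology_generated_by
        ({{A. A \<inter> G \<noteq> {}} | G. openin T G} \<union> {{A. A \<inter> D = {}} | D. compactin T D}))
     (closed_sets T)"

definition vietoris_topology :: "'a topology \<Rightarrow> 'a set topology" where
  "vietoris_topology T = subtopology
     (topology_generated_by
        ({{A. A \<inter> G \<noteq> {}} | G. openin T G} \<union> {{A. A \<inter> E = {}} | E. closedin T E}))
     (closed_sets T)"

definition topologically_order_embeds_down :: "'a topology \<Rightarrow> ('a \<Rightarrow> 'a \<Rightarrow> bool) \<Rightarrow> bool" where
  "topologically_order_embeds_down T le \<longleftrightarrow>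
     (\<forall>x\<in>topspace T. down_set T le x \<in> closed_sets T) \<and>
     (\<forall>x\<in>topspace T. \<forall>y\<in>topspace T. le x y \<longleftrightarrow> down_set T le x \<subseteq> down_set T le y) \<and>
     homeomorphic_map T (subtopology (fell_topology T) (down_set T le ` topspace T)) (down_set T le)"

definition continuous_map_at :: "'a topology \<Rightarrow> 'b topology \<Rightarrow> ('a \<Rightarrow> 'b) \<Rightarrow> 'a \<Rightarrow> bool" where
  "continuous_map_at T U f x \<longleftrightarrow>
     (\<forall>V. openin U V \<and> f x \<in> V \<longrightarrow> (\<exists>W. openin T W \<and> x \<in> W \<and> f ` W \<subseteq> V))"

definition open_square :: "(real \<times> real) set" where
  "open_square = {(u, v). 0 < u \<and> u < 1 \<and> 0 < v \<and> v < 1}"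

definition coord_le :: "real \<times> real \<Rightarrow> real \<times> real \<Rightarrow> bool" where
  "coord_le p q \<longleftrightarrow> fst p \<le> fst q \<and> snd p \<le> snd q"

end

theory Submission
  imports Defs
begin

text \<open>With the coordinatewise order, the down-set of a point x of an open set X in the
  plane is the trace on X of the closed quadrant below x. Writing Q for the closed positive
  quadrant, the points whose down-set hits an open G, resp. misses a compact K, are the traces
  of the open set G + Q, resp. of the complement of the closed set K + Q; hence the down-set
  map is Fell continuous. Conversely, a down-set that meets the quadrant above x - (d, d) and
  misses the two points x + (d, -d) and x + (-d, d) has its vertex within d of x in both
  coordinates, so the map is open onto its image. A Vietoris miss-set may instead avoid the
  closed set {p. fst x + snd p \<le> fst p}, which lies far from x near the bottom edge of the
  square: the down-set of x misses it, but the down-set of every y to the right of x meets it.\<close>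

lemma coord_le_eq_less_eq: "coord_le = (\<le>)"
  by (auto simp: fun_eq_iff coord_le_def less_eq_prod_def)

lemma open_square_eq_box: "open_square = box (0, 0) (1, 1)"
  by (auto simp: open_square_def mem_box Basis_prod_def)

lemma open_open_square: "open open_square"
  by (simp add: open_square_eq_box open_box)

lemma down_set_top_of_set_le: "down_set (top_of_set X) (\<le>) = (\<lambda>x. X \<inter> {..x})"
  by (auto simp: down_set_def)

lemma up_set_top_of_set_le: "up_set (top_of_set X) (\<le>) x = X \<inter> {x..}"
  by (auto simp: up_set_def)

lemma closedin_down_set:
  fixes x :: "'a::ordered_euclidean_space"
  shows "closedin (top_of_set X) (X \<inter> {..x})"
  by (simp add: closedin_closed_Int)

lemma down_set_subset_iff:
  fixes x y :: "'a::order"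
  assumes "x \<in> X"
  shows "X \<inter> {..x} \<subseteq> X \<inter> {..y} \<longleftrightarrow> x \<le> y"
  using assms by auto

lemma down_sets_subset_closed_sets:
  fixes X :: "'a::ordered_euclidean_space set"
  shows "(\<lambda>x. X \<inter> {..x}) ` X \<subseteq> closed_sets (top_of_set X)"
  by (auto simp: closed_sets_def closedin_down_set)

lemma inf_mem_is_interval:
  fixes x y :: "'a::ordered_euclidean_space"
  assumes "is_interval X" "x \<in> X" "y \<in> X"
  shows "inf x y \<in> X"
  using assms by (rule mem_is_intervalI) (auto simp: inner_Basis_inf_left)

lemma sup_mem_is_interval:
  fixes x y :: "'a::ordered_euclidean_space"
  assumes "is_interval X" "x \<in> X" "y \<in> X"
  shows "sup x y \<in> X"
  using assms by (rule mem_is_intervalI) (auto simp: inner_Basis_sup_left)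

lemma atLeastAtMost_subset_is_interval:
  fixes x y :: "'a::ordered_euclidean_space"
  assumes "is_interval X" "x \<in> X" "y \<in> X"
  shows "{x..y} \<subseteq> X"
  using assms by (simp add: interval_cbox interval_subset_is_interval)

lemma is_meet_inf:
  fixes x y :: "'a::lattice"
  assumes "inf x y \<in> topspace T"
  shows "is_meet T (\<le>) x y (inf x y)"
  using assms by (simp add: is_meet_def)

lemma meet_op_eq_inf:
  fixes x y :: "'a::lattice"
  assumes "inf x y \<in> topspace T"
  shows "meet_op T (\<le>) x y = inf x y"
  unfolding meet_op_def
proof (rule the_equality)
  show "is_meet T (\<le>) x y (inf x y)" using assms by (rule is_meet_inf)
  fix m assume "is_meet T (\<le>) x y m"
  with assms show "m = inf x y" by (auto simp: is_meet_def intro: order.antisym)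
qed

lemma is_join_sup:
  fixes x y :: "'a::lattice"
  assumes "sup x y \<in> topspace T"
  shows "is_join T (\<le>) x y (sup x y)"
  using assms by (simp add: is_join_def)

lemma join_op_eq_sup:
  fixes x y :: "'a::lattice"
  assumes "sup x y \<in> topspace T"
  shows "join_op T (\<le>) x y = sup x y"
  unfolding join_op_def
proof (rule the_equality)
  show "is_join T (\<le>) x y (sup x y)" using assms by (rule is_join_sup)
  fix j assume "is_join T (\<le>) x y j"
  with assms show "j = sup x y" by (auto simp: is_join_def intro: order.antisym)
qed

lemma closed_less_eq_graph: "closed {(x, y). x \<le> (y :: 'a::ordered_euclidean_space)}"
proof -
  have "{(x, y). x \<le> (y :: 'a)} = (\<lambda>p. snd p - fst p) -` {0..}"
    by auto
  then show ?thesis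
    by (simp add: closed_vimage continuous_on_diff continuous_on_fst continuous_on_snd)
qed

lemma continuous_on_inf [continuous_intros]:
  fixes f g :: "'a::topological_space \<Rightarrow> 'b::ordered_euclidean_space"
  assumes "continuous_on S f" "continuous_on S g"
  shows "continuous_on S (\<lambda>x. inf (f x) (g x))"
  using assms by (simp add: continuous_on_def tendsto_inf)

lemma continuous_on_sup [continuous_intros]:
  fixes f g :: "'a::topological_space \<Rightarrow> 'b::ordered_euclidean_space"
  assumes "continuous_on S f" "continuous_on S g"
  shows "continuous_on S (\<lambda>x. sup (f x) (g x))"
  using assms by (simp add: continuous_on_def tendsto_sup)

lemma po_space_less_eq:
  fixes X :: "'a::ordered_euclidean_space set"
  shows "po_space (top_of_set X) (\<le>)"
proof -
  have "partial_order_on_space (top_of_set X) (\<le>)"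
    by (auto simp: partial_order_on_space_def)
  moreover have "{(x, y). x \<in> topspace (top_of_set X) \<and> y \<in> topspace (top_of_set X) \<and> x \<le> y}
        = (X \<times> X) \<inter> {(x, y). x \<le> y}"
    by auto
  ultimately show ?thesis
    unfolding po_space_def
    by (simp add: closedin_closed_Int closed_less_eq_graph flip: subtopology_Times)
qed

lemma topological_lattice_interval:
  fixes X :: "'a::ordered_euclidean_space set"
  assumes "is_interval X"
  shows "topological_lattice (top_of_set X) (\<le>)"
proof -
  let ?X2 = "prod_topology (top_of_set X) (top_of_set X)"
  have "continuous_on (X \<times> X) (\<lambda>p. inf (fst p) (snd p))"
    "continuous_on (X \<times> X) (\<lambda>p. sup (fst p) (snd p))"
    by (intro continuous_intros)+
  moreover have "(\<lambda>p. inf (fst p) (snd p)) \<in> X \<times> X \<rightarrow> X"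
    "(\<lambda>p. sup (fst p) (snd p)) \<in> X \<times> X \<rightarrow> X"
    using assms inf_mem_is_interval sup_mem_is_interval by auto
  ultimately have inf: "continuous_map ?X2 (top_of_set X) (\<lambda>p. inf (fst p) (snd p))"
    and sup: "continuous_map ?X2 (top_of_set X) (\<lambda>p. sup (fst p) (snd p))"
    by (simp_all add: continuous_map_in_subtopology flip: subtopology_Times)
  have "continuous_map ?X2 (top_of_set X) (\<lambda>(x, y). meet_op (top_of_set X) (\<le>) x y)"
    using inf by (rule continuous_map_eq) (auto simp: assms meet_op_eq_inf inf_mem_is_interval)
  moreover have "continuous_map ?X2 (top_of_set X) (\<lambda>(x, y). join_op (top_of_set X) (\<le>) x y)"
    using sup by (rule continuous_map_eq) (auto simp: assms join_op_eq_sup sup_mem_is_interval)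
  moreover have "is_meet (top_of_set X) (\<le>) x y (inf x y)"
    and "is_join (top_of_set X) (\<le>) x y (sup x y)" if "x \<in> X" "y \<in> X" for x y
    using that assms
    by (simp_all add: is_meet_inf is_join_sup inf_mem_is_interval sup_mem_is_interval)
  ultimately show ?thesis
    unfolding topological_lattice_def topspace_euclidean_subtopology using po_space_less_eq by blast
qed

lemma order_connected_interval:
  fixes X :: "'a::ordered_euclidean_space set"
  assumes "is_interval X"
  shows "order_connected (top_of_set X) (\<le>)"
  unfolding order_connected_def
proof (intro ballI impI)
  fix x y assume "x \<in> topspace (top_of_set X)" "y \<in> topspace (top_of_set X)" "x \<le> y"
  then have "{x..y} \<subseteq> X"
    using assms by (simp add: atLeastAtMost_subset_is_interval)
  then have "up_set (top_of_set X) (\<le>) x \<inter> down_set (top_of_set X) (\<le>) y = {x..y}"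
    by (auto simp: up_set_top_of_set_le down_set_top_of_set_le)
  with \<open>{x..y} \<subseteq> X\<close>
  show "connectedin (top_of_set X) (up_set (top_of_set X) (\<le>) x \<inter> down_set (top_of_set X) (\<le>) y)"
    by (simp add: connectedin_subtopology)
qed

lemma locally_compact_space_open:
  fixes X :: "'a::heine_borel set"
  assumes "open X"
  shows "locally_compact_space (top_of_set X)"
  using assms by (simp add: locally_compact_space_open_subset locally_compact_space_euclidean)

definition fell_subbasis :: "'a topology \<Rightarrow> 'a set set set" where
  "fell_subbasis T = {{A. A \<inter> G \<noteq> {}} | G. openin T G} \<union> {{A. A \<inter> D = {}} | D. compactin T D}"

definition vietoris_subbasis :: "'a topology \<Rightarrow> 'a set set set" where
  "vietoris_subbasis T = {{A. A \<inter> G \<noteq> {}} | G. openin T G} \<union> {{A. A \<inter> E = {}} | E. closedin T E}"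

lemma fell_topology_eq_subbasis:
  "fell_topology T = subtopology (topology_generated_by (fell_subbasis T)) (closed_sets T)"
  by (simp add: fell_topology_def fell_subbasis_def)

lemma vietoris_topology_eq_subbasis:
  "vietoris_topology T = subtopology (topology_generated_by (vietoris_subbasis T)) (closed_sets T)"
  by (simp add: vietoris_topology_def vietoris_subbasis_def)

lemma subtopology_fell_topology:
  assumes "S \<subseteq> closed_sets T"
  shows "subtopology (fell_topology T) S = subtopology (topology_generated_by (fell_subbasis T)) S"
  using assms by (simp add: fell_topology_eq_subbasis subtopology_subtopology Int_absorb1)

lemma subtopology_vietoris_topology:
  assumes "S \<subseteq> closed_sets T"
  shows "subtopology (vietoris_topology T) S = subtopology (topology_generated_by (vietoris_subbasis T)) S"
  using assms by (simp add: vietoris_topology_eq_subbasis subtopology_subtopology Int_absorb1)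

lemma hit_in_fell_subbasis: "openin T G \<Longrightarrow> {A. A \<inter> G \<noteq> {}} \<in> fell_subbasis T"
  by (auto simp: fell_subbasis_def)

lemma miss_in_fell_subbasis: "compactin T K \<Longrightarrow> {A. A \<inter> K = {}} \<in> fell_subbasis T"
  by (auto simp: fell_subbasis_def)

lemma miss_in_vietoris_subbasis: "closedin T E \<Longrightarrow> {A. A \<inter> E = {}} \<in> vietoris_subbasis T"
  by (auto simp: vietoris_subbasis_def)

lemma Union_fell_subbasis: "\<Union> (fell_subbasis T) = UNIV"
proof -
  have "{A. A \<inter> {} = {}} \<in> fell_subbasis T"
    unfolding fell_subbasis_def by blast
  then show ?thesis by auto
qed

lemma topspace_fell_topology: "topspace (fell_topology T) = closed_sets T"
  by (simp add: fell_topology_eq_subbasis Union_fell_subbasis)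

lemma continuous_map_fell_topology_hit_miss:
  assumes "f \<in> topspace U \<rightarrow> S" "S \<subseteq> closed_sets T"
    and hit: "\<And>G. openin T G \<Longrightarrow> openin U {x \<in> topspace U. f x \<inter> G \<noteq> {}}"
    and miss: "\<And>K. compactin T K \<Longrightarrow> openin U {x \<in> topspace U. f x \<inter> K = {}}"
  shows "continuous_map U (subtopology (fell_topology T) S) f"
  unfolding continuous_map_in_subtopology subtopology_fell_topology[OF assms(2)]
proof (intro conjI continuous_on_generated_topo)
  fix V assume "V \<in> fell_subbasis T"
  then consider G where "openin T G" "V = {A. A \<inter> G \<noteq> {}}"
    | K where "compactin T K" "V = {A. A \<inter> K = {}}"
    unfolding fell_subbasis_def by blast
  then show "openin U (f -` V \<inter> topspace U)"
  proof cases
    case 1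
    then show ?thesis using hit[of G] by (simp add: Int_commute Collect_conj_eq)
  next
    case 2
    then show ?thesis using miss[of K] by (simp add: Int_commute Collect_conj_eq)
  qed
qed (simp_all add: assms(1) Union_fell_subbasis)

lemma upward_closure_eq_sums:
  fixes G :: "'a::ordered_euclidean_space set"
  shows "{x. \<exists>g\<in>G. g \<le> x} = (\<Union>g\<in>G. \<Union>q\<in>{0..}. {g + q})"
proof (intro set_eqI iffI)
  fix x assume "x \<in> {x. \<exists>g\<in>G. g \<le> x}"
  then obtain g where "g \<in> G" "g \<le> x" by blast
  then show "x \<in> (\<Union>g\<in>G. \<Union>q\<in>{0..}. {g + q})"
    by (intro UN_I[of g] UN_I[of "x - g"]) auto
next
  fix x assume "x \<in> (\<Union>g\<in>G. \<Union>q\<in>{0..}. {g + q})"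
  then obtain g q where "g \<in> G" "0 \<le> q" "x = g + q" by blast
  then have "g \<le> x" by simp
  with \<open>g \<in> G\<close> show "x \<in> {x. \<exists>g\<in>G. g \<le> x}" by blast
qed

lemma open_upward_closure:
  fixes G :: "'a::ordered_euclidean_space set"
  assumes "open G"
  shows "open {x. \<exists>g\<in>G. g \<le> x}"
  using assms by (simp add: upward_closure_eq_sums open_sums)

lemma closed_upward_closure:
  fixes K :: "'a::ordered_euclidean_space set"
  assumes "compact K"
  shows "closed {x. \<exists>k\<in>K. k \<le> x}"
proof -
  have "(\<Union>g\<in>K. \<Union>q\<in>{0..}. {g + q}) = (\<Union>q\<in>{0..}. \<Union>k\<in>K. {q + k})"
    by (auto simp: add.commute)
  then show ?thesis
    using assms by (simp add: upward_closure_eq_sums closed_compact_sums)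
qed

lemma continuous_map_down_set_fell:
  fixes X :: "'a::ordered_euclidean_space set"
  assumes "open X"
  shows "continuous_map (top_of_set X)
           (subtopology (fell_topology (top_of_set X)) ((\<lambda>x. X \<inter> {..x}) ` X)) (\<lambda>x. X \<inter> {..x})"
proof (rule continuous_map_fell_topology_hit_miss)
  show "(\<lambda>x. X \<inter> {..x}) ` X \<subseteq> closed_sets (top_of_set X)"
    by (rule down_sets_subset_closed_sets)
next
  fix G assume "openin (top_of_set X) G"
  then have "open G" "G \<subseteq> X"
    using assms by (auto dest: openin_imp_subset simp: openin_open_eq)
  then have "{x \<in> topspace (top_of_set X). X \<inter> {..x} \<inter> G \<noteq> {}} = X \<inter> {x. \<exists>g\<in>G. g \<le> x}"
    by auto
  then show "openin (top_of_set X) {x \<in> topspace (top_of_set X). X \<inter> {..x} \<inter> G \<noteq> {}}"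
    using \<open>open G\<close> by (simp add: openin_open_Int open_upward_closure)
next
  fix K assume "compactin (top_of_set X) K"
  then have "compact K" "K \<subseteq> X"
    by (auto simp: compactin_subtopology)
  then have "{x \<in> topspace (top_of_set X). X \<inter> {..x} \<inter> K = {}} = X - {x. \<exists>k\<in>K. k \<le> x}"
    by auto
  then show "openin (top_of_set X) {x \<in> topspace (top_of_set X). X \<inter> {..x} \<inter> K = {}}"
    using \<open>compact K\<close> assms by (simp add: openin_open_eq open_Diff closed_upward_closure)
qed auto

lemma dist_le_abs_fst_plus_abs_snd:
  fixes x y :: "real \<times> real"
  shows "dist y x \<le> \<bar>fst y - fst x\<bar> + \<bar>snd y - snd x\<bar>"
  using sqrt_sum_squares_le_sum_abs by (simp add: dist_prod_def dist_real_def)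

lemma fell_neighbourhood_down_set:
  fixes X :: "(real \<times> real) set"
  assumes "open X" "x \<in> X" "e > 0"
  obtains N where "openin (topology_generated_by (fell_subbasis (top_of_set X))) N"
    and "X \<inter> {..x} \<in> N" and "\<And>y. y \<in> X \<Longrightarrow> X \<inter> {..y} \<in> N \<Longrightarrow> dist y x < e"
proof -
  obtain r where "r > 0" "ball x r \<subseteq> X"
    using assms openE by blast
  define d where "d = min e r / 3"
  have "d > 0" "2 * d < e" "2 * d < r"
    using \<open>e > 0\<close> \<open>r > 0\<close> by (auto simp: d_def)
  define G where "G = X \<inter> {p. fst x - d < fst p \<and> snd x - d < snd p}"
  define c1 where "c1 = (fst x + d, snd x - d)"
  define c2 where "c2 = (fst x - d, snd x + d)"
  have "dist c1 x < r" "dist c2 x < r"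
    using dist_le_abs_fst_plus_abs_snd[of c1 x] dist_le_abs_fst_plus_abs_snd[of c2 x]
      \<open>d > 0\<close> \<open>2 * d < r\<close>
    by (simp_all add: c1_def c2_def)
  then have "c1 \<in> X" "c2 \<in> X"
    using \<open>ball x r \<subseteq> X\<close> by (auto simp: dist_commute)
  have "openin (top_of_set X) G"
    unfolding G_def by (intro openin_open_Int open_Collect_conj open_Collect_less continuous_intros)
  then have subbasic: "{A. A \<inter> G \<noteq> {}} \<in> fell_subbasis (top_of_set X)"
    "{A. A \<inter> {c1} = {}} \<in> fell_subbasis (top_of_set X)"
    "{A. A \<inter> {c2} = {}} \<in> fell_subbasis (top_of_set X)"
    using \<open>c1 \<in> X\<close> \<open>c2 \<in> X\<close> by (intro hit_in_fell_subbasis miss_in_fell_subbasis; simp)+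
  define N where "N = {A. A \<inter> G \<noteq> {}} \<inter> {A. A \<inter> {c1} = {}} \<inter> {A. A \<inter> {c2} = {}}"
  show thesis
  proof
    show "openin (topology_generated_by (fell_subbasis (top_of_set X))) N"
      unfolding N_def using subbasic by (intro openin_Int topology_generated_by_Basis)
    show "X \<inter> {..x} \<in> N"
      using \<open>x \<in> X\<close> \<open>d > 0\<close> by (auto simp: N_def G_def c1_def c2_def less_eq_prod_def)
    fix y assume "y \<in> X" "X \<inter> {..y} \<in> N"
    then obtain p where "p \<le> y" "p \<in> G" and "\<not> c1 \<le> y" "\<not> c2 \<le> y"
      using \<open>c1 \<in> X\<close> \<open>c2 \<in> X\<close> by (auto simp: N_def)
    then have "\<bar>fst y - fst x\<bar> < d" "\<bar>snd y - snd x\<bar> < d"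
      by (auto simp: G_def c1_def c2_def less_eq_prod_def)
    then show "dist y x < e"
      using dist_le_abs_fst_plus_abs_snd[of y x] \<open>2 * d < e\<close> by linarith
  qed
qed

lemma open_map_down_set_fell:
  fixes X :: "(real \<times> real) set"
  assumes "open X"
  shows "open_map (top_of_set X)
           (subtopology (fell_topology (top_of_set X)) ((\<lambda>x. X \<inter> {..x}) ` X)) (\<lambda>x. X \<inter> {..x})"
  unfolding open_map_def subtopology_fell_topology[OF down_sets_subset_closed_sets]
proof (intro allI impI)
  let ?F = "subtopology (topology_generated_by (fell_subbasis (top_of_set X)))
             ((\<lambda>x. X \<inter> {..x}) ` X)"
  fix U assume "openin (top_of_set X) U"
  then have "open U" "U \<subseteq> X"
    using assms by (auto dest: openin_imp_subset simp: openin_open_eq)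
  show "openin ?F ((\<lambda>x. X \<inter> {..x}) ` U)"
  proof (subst openin_subopen, intro ballI)
    fix A assume "A \<in> (\<lambda>x. X \<inter> {..x}) ` U"
    then obtain x where "x \<in> U" "A = X \<inter> {..x}" by blast
    obtain e where "e > 0" "ball x e \<subseteq> U"
      using \<open>open U\<close> \<open>x \<in> U\<close> openE by blast
    obtain N where N: "openin (topology_generated_by (fell_subbasis (top_of_set X))) N"
      "X \<inter> {..x} \<in> N" "\<And>y. y \<in> X \<Longrightarrow> X \<inter> {..y} \<in> N \<Longrightarrow> dist y x < e"
      using fell_neighbourhood_down_set[OF assms _ \<open>e > 0\<close>] \<open>x \<in> U\<close> \<open>U \<subseteq> X\<close> by blast
    have "openin ?F (N \<inter> (\<lambda>x. X \<inter> {..x}) ` X)"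
      using N(1) by (rule openin_subtopology_Int)
    moreover have "N \<inter> (\<lambda>x. X \<inter> {..x}) ` X \<subseteq> (\<lambda>x. X \<inter> {..x}) ` U"
      using N(3) \<open>ball x e \<subseteq> U\<close> by (fastforce simp: dist_commute)
    ultimately show "\<exists>V. openin ?F V \<and> A \<in> V \<and> V \<subseteq> (\<lambda>x. X \<inter> {..x}) ` U"
      using N(2) \<open>A = X \<inter> {..x}\<close> \<open>x \<in> U\<close> \<open>U \<subseteq> X\<close> by blast
  qed
qed

lemma topologically_order_embeds_down_open:
  fixes X :: "(real \<times> real) set"
  assumes "open X"
  shows "topologically_order_embeds_down (top_of_set X) (\<le>)"
  unfolding topologically_order_embeds_down_def down_set_top_of_set_le
    topspace_euclidean_subtopology
proof (intro conjI ballI)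
  show "X \<inter> {..x} \<in> closed_sets (top_of_set X)" for x
    by (simp add: closed_sets_def closedin_down_set)
  show "x \<le> y \<longleftrightarrow> X \<inter> {..x} \<subseteq> X \<inter> {..y}" if "x \<in> X" for x y
    using that down_set_subset_iff by blast
  have "inj_on (\<lambda>x. X \<inter> {..x}) X"
    by (rule inj_onI) (metis down_set_subset_iff order.antisym subset_refl)
  moreover have "topspace (subtopology (fell_topology (top_of_set X)) ((\<lambda>x. X \<inter> {..x}) ` X))
                 = (\<lambda>x. X \<inter> {..x}) ` X"
    using down_sets_subset_closed_sets by (auto simp: topspace_fell_topology)
  ultimately show "homeomorphic_map (top_of_set X)
      (subtopology (fell_topology (top_of_set X)) ((\<lambda>x. X \<inter> {..x}) ` X)) (\<lambda>x. X \<inter> {..x})"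
    using assms continuous_map_down_set_fell open_map_down_set_fell
    by (intro bijective_open_imp_homeomorphic_map) auto
qed

lemma not_continuous_map_at_down_set_vietoris:
  assumes "x \<in> open_square"
  shows "\<not> continuous_map_at (top_of_set open_square)
           (subtopology (vietoris_topology (top_of_set open_square))
              ((\<lambda>x. open_square \<inter> {..x}) ` open_square))
           (\<lambda>x. open_square \<inter> {..x}) x"
proof
  let ?D = "\<lambda>x. open_square \<inter> {..x}"
  assume cont: "continuous_map_at (top_of_set open_square)
    (subtopology (vietoris_topology (top_of_set open_square)) (?D ` open_square)) ?D x"
  have x: "0 < fst x" "fst x < 1" "0 < snd x" "snd x < 1"
    using assms by (auto simp: open_square_def)
  define E where "E = open_square \<inter> {p. fst x + snd p \<le> fst p}"
  have "closedin (top_of_set open_square) E"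
    unfolding E_def by (intro closedin_closed_Int closed_Collect_le continuous_intros)
  define V where "V = {A. A \<inter> E = {}} \<inter> ?D ` open_square"
  have "openin (subtopology (vietoris_topology (top_of_set open_square)) (?D ` open_square)) V"
    unfolding V_def subtopology_vietoris_topology[OF down_sets_subset_closed_sets]
    by (intro openin_subtopology_Int topology_generated_by_Basis miss_in_vietoris_subbasis) fact
  moreover have "?D x \<in> V"
    using assms by (auto simp: V_def E_def open_square_def less_eq_prod_def)
  ultimately obtain W where "openin (top_of_set open_square) W" "x \<in> W" "?D ` W \<subseteq> V"
    using cont unfolding continuous_map_at_def by blast
  then obtain r where "r > 0" "ball x r \<subseteq> W"
    using open_open_square by (metis openE openin_open_eq)
  define d where "d = min (r / 2) ((1 - fst x) / 2)"
  have d: "0 < d" "d < r" "fst x + d < 1"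
    using \<open>r > 0\<close> x min.cobounded1[of "r / 2" "(1 - fst x) / 2"]
      min.cobounded2[of "r / 2" "(1 - fst x) / 2"]
    by (auto simp: d_def)
  define y where "y = (fst x + d, snd x)"
  have "dist y x < r"
    using d by (simp add: y_def dist_prod_def dist_real_def)
  with \<open>ball x r \<subseteq> W\<close> have "y \<in> W"
    by (auto simp: dist_commute)
  with \<open>?D ` W \<subseteq> V\<close> have "?D y \<inter> E = {}"
    by (auto simp: V_def)
  moreover have "(fst x + d, min d (snd x)) \<in> ?D y \<inter> E"
    using x d by (auto simp: y_def E_def open_square_def less_eq_prod_def)
  ultimately show False by blast
qed

theorem mainTheorem10:
  defines "T \<equiv> subtopology euclidean open_square"
  shows "(locally_compact_space T \<and> order_connected T coord_le \<and> Hausdorff_space T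
         \<and> topological_lattice T coord_le)
    \<and> topologically_order_embeds_down T coord_le
    \<and> (\<forall>x\<in>topspace T. \<not> continuous_map_at T
           (subtopology (vietoris_topology T) (down_set T coord_le ` topspace T))
           (down_set T coord_le) x)"
proof -
  have interval: "is_interval open_square"
    by (simp add: open_square_eq_box)
  show ?thesis
    unfolding T_def coord_le_eq_less_eq down_set_top_of_set_le topspace_euclidean_subtopology
    using locally_compact_space_open[OF open_open_square] order_connected_interval[OF interval]
      topological_lattice_interval[OF interval]
      topologically_order_embeds_down_open[OF open_open_square]
      not_continuous_map_at_down_set_vietoris
    by (simp add: Hausdorff_space_subtopology)
qed

end
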